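(* Let $0<\alpha<1$, let $\Gamma$ be a Jordan curve of class $C^{1+\alpha}$, and let $\eta\in C^{1+\alpha}(\Gamma)$ be such that $\eta(\Gamma)=\mathbb{T}$ and $\eta^{-1}:\mathbb{T}\to\Gamma$ exists and is differentiable. Fix any pseudoanalytic extension of $\eta$ to $\mathbb{C}$, also denoted $\eta$. Then there is a neighborhood $U$ of $\Gamma$ such that $\eta:U\to\eta(U)$ is a $C^1$ diffeomorphism, $\eta(U)$ is a neighborhood of $\mathbb{T}$, and $\eta$ is bi-Lipschitz in $U$: there are constants $c,C>0$ with $$c|z-w|\le|\eta(z)-\eta(w)|\le C|z-w|,\qquad z,w\in U.$$
   Context: $\mathbb{T}$ is the unit circle. A Jordan curve $\Gamma$ is of class $C^{1+\alpha}$ if $\Gamma=\psi(\mathbb{T})$ for a bijection $\psi:\mathbb{T}\to\Gamma$ with $\psi\in C^1(\mathbb{T})$, $\psi'$ nowhere vanishing and $\psi'$ Hölder of order $\alpha$. A function $f:\Gamma\to\mathbb{C}$ belongs to $C^{1+\alpha}(\Gamma)$ if $f\circ\psi\in C^1(\mathbb{T})$ and $(f\circ\psi)'$ is Hölder of order $\alpha$. A pseudoanalytic extension of $f\in C^{1+\alpha}(\Gamma)$ is a function $F\in C^1(\mathbb{C})$ with $F|_\Gamma=f$ and $\left|\frac{\partial F}{\partial\bar z}(z)\right|\le C_f\operatorname{dist}(z,\Gamma)^\alpha$ for all $z\in\mathbb{C}$, for some constant $C_f$, where $\frac{\partial}{\partial\bar z}=\frac12\left(\frac{\partial}{\partial x}+i\frac{\partial}{\partial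 y}\right)$. Such extensions always exist. *)

theory Defs
  imports "HOL-Analysis.Analysis"
begin

text \<open>Points of the unit circle are parametrised by angle t via cis t.
  A function g on the circle is handled through the 2pi-periodic function t |-> g (cis t).\<close>

definition holder_on :: "real \<Rightarrow> real set \<Rightarrow> (real \<Rightarrow> complex) \<Rightarrow> bool" where
  "holder_on \<alpha> S f \<longleftrightarrow> (\<exists>K. \<forall>x\<in>S. \<forall>y\<in>S. norm (f x - f y) \<le> K * dist x y powr \<alpha>)"

definition C1a_circle_with :: "real \<Rightarrow> (complex \<Rightarrow> complex) \<Rightarrow> (real \<Rightarrow> complex) \<Rightarrow> bool" where
  "C1a_circle_with \<alpha> g g' \<longleftrightarrow>
     (\<forall>t. ((\<lambda>s. g (cis s)) has_vector_derivative g' t) (at t)) \<and> holder_on \<alpha> UNIV g'"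

definition C1a_circle :: "real \<Rightarrow> (complex \<Rightarrow> complex) \<Rightarrow> bool" where
  "C1a_circle \<alpha> g \<longleftrightarrow> (\<exists>g'. C1a_circle_with \<alpha> g g')"

definition C1a_jordan_param :: "real \<Rightarrow> (complex \<Rightarrow> complex) \<Rightarrow> complex set \<Rightarrow> bool" where
  "C1a_jordan_param \<alpha> \<psi> \<Gamma> \<longleftrightarrow> bij_betw \<psi> (sphere 0 1) \<Gamma> \<and>
     (\<exists>\<psi>'. C1a_circle_with \<alpha> \<psi> \<psi>' \<and> (\<forall>t. \<psi>' t \<noteq> 0))"

definition C1a_on_curve :: "real \<Rightarrow> (complex \<Rightarrow> complex) \<Rightarrow> (complex \<Rightarrow> complex) \<Rightarrow> bool" where
  "C1a_on_curve \<alpha> \<psi> f \<longleftrightarrow> C1a_circle \<alpha> (f \<circ> \<psi>)"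

definition C1_on :: "complex set \<Rightarrow> (complex \<Rightarrow> complex) \<Rightarrow> bool" where
  "C1_on S f \<longleftrightarrow> (\<forall>z\<in>S. f differentiable (at z)) \<and>
     continuous_on S (\<lambda>z. frechet_derivative f (at z) 1) \<and>
     continuous_on S (\<lambda>z. frechet_derivative f (at z) \<i>)"

text \<open>Wirtinger derivative d/d zbar = (d/dx + i d/dy)/2.\<close>
definition dbar :: "(complex \<Rightarrow> complex) \<Rightarrow> complex \<Rightarrow> complex" where
  "dbar F z = (frechet_derivative F (at z) 1 + \<i> * frechet_derivative F (at z) \<i>) / 2"

definition pseudoanalytic_ext ::
  "real \<Rightarrow> complex set \<Rightarrow> (complex \<Rightarrow> complex) \<Rightarrow> (complex \<Rightarrow> complex) \<Rightarrow> bool" where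
  "pseudoanalytic_ext \<alpha> \<Gamma> f F \<longleftrightarrow> C1_on UNIV F \<and> (\<forall>z\<in>\<Gamma>. F z = f z) \<and>
     (\<exists>C. \<forall>z. norm (dbar F z) \<le> C * infdist z \<Gamma> powr \<alpha>)"

end

theory Submission
  imports Defs
begin

text \<open>
  On \<Gamma> the pseudoanalytic extension satisfies \<open>dbar \<eta> = 0\<close>, so its real derivative there is
  multiplication by the complex number \<open>a = \<partial>\<eta>/\<partial>x\<close>. This number cannot vanish: otherwise \<open>\<eta> \<circ> \<psi> \<circ> cis\<close> would
  have zero derivative at the corresponding angle, while composing it with a differentiable branch
  of the angle on the unit circle and then with the differentiable map \<open>\<eta>\<inverse> \<circ> cis\<close> recovers
  \<open>\<psi> \<circ> cis\<close>, whose derivative is nonzero. By compactness \<open>\<bar>a\<bar> \<ge> m > 0\<close> on \<Gamma>, and uniform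
  continuity of \<open>D\<eta>\<close> gives \<open>\<bar>D\<eta>(x) h\<bar> \<ge> m/2 \<bar>h\<bar>\<close> and \<open>onorm (D\<eta>(x)) \<le> B\<close> on all balls of a fixed
  radius centred on \<Gamma>; the mean value inequality makes \<eta> bi-Lipschitz on each such ball. Since \<eta>
  is injective on the compact set \<Gamma>, points of \<Gamma> a fixed distance apart have images a fixed
  distance apart, and this globalises the estimate to a tubular neighbourhood U of \<Gamma>. Invariance
  of domain makes \<open>\<eta>(U)\<close> open, and the inverse function theorem, with Cramer's rule for the inverse
  of the derivative, shows that the inverse is \<open>C\<^sup>1\<close>.
\<close>

lemma linear_complex_decomp:
  fixes L :: "complex \<Rightarrow> 'a::real_vector"
  assumes "linear L"
  shows "L h = Re h *\<^sub>R L 1 + Im h *\<^sub>R L \<i>"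
proof -
  have "h = Re h *\<^sub>R 1 + Im h *\<^sub>R \<i>"
    by (simp add: complex_eq_iff)
  then have "L h = L (Re h *\<^sub>R 1 + Im h *\<^sub>R \<i>)"
    by simp
  also have "\<dots> = Re h *\<^sub>R L 1 + Im h *\<^sub>R L \<i>"
    using assms by (simp add: linear_add linear_scale)
  finally show ?thesis .
qed

lemma norm_linear_complex_le:
  fixes L :: "complex \<Rightarrow> 'a::real_normed_vector"
  assumes "linear L"
  shows "norm (L h) \<le> (norm (L 1) + norm (L \<i>)) * norm h"
proof -
  have "norm (L h) \<le> \<bar>Re h\<bar> * norm (L 1) + \<bar>Im h\<bar> * norm (L \<i>)"
    unfolding linear_complex_decomp[OF assms, of h]
    by (metis norm_triangle_le norm_scaleR order_refl)
  also have "\<dots> \<le> norm h * norm (L 1) + norm h * norm (L \<i>)"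
    by (intro add_mono mult_right_mono) (auto simp: abs_Re_le_cmod abs_Im_le_cmod)
  finally show ?thesis
    by (simp add: algebra_simps)
qed

lemma onorm_linear_complex_le:
  fixes L :: "complex \<Rightarrow> 'a::real_normed_vector"
  assumes "linear L"
  shows "onorm L \<le> norm (L 1) + norm (L \<i>)"
  using norm_linear_complex_le[OF assms] by (intro onorm_le) blast

lemma complex_linear_eq_mult:
  fixes L :: "complex \<Rightarrow> complex"
  assumes "linear L" "L \<i> = \<i> * L 1"
  shows "L h = h * L 1"
proof -
  have "L h = (of_real (Re h) + \<i> * of_real (Im h)) * L 1"
    using linear_complex_decomp[OF assms(1), of h] assms(2)
    by (simp add: scaleR_conv_of_real algebra_simps)
  then show ?thesis
    by (simp add: complex_eq[symmetric])
qed

text \<open>The determinant of \<open>L\<close> as a real \<open>2 \<times> 2\<close> matrix with columns \<open>L 1\<close> and \<open>L \<i>\<close>,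
  and the inverse of \<open>L\<close> by Cramer's rule.\<close>

definition real_linear_det :: "(complex \<Rightarrow> complex) \<Rightarrow> real" where
  "real_linear_det L = Im (cnj (L 1) * L \<i>)"

definition real_linear_inverse :: "(complex \<Rightarrow> complex) \<Rightarrow> complex \<Rightarrow> complex" where
  "real_linear_inverse L v =
     (of_real (- Im (cnj (L \<i>) * v)) + \<i> * of_real (Im (cnj (L 1) * v))) / of_real (real_linear_det L)"

lemma real_linear_inverse_right:
  assumes "linear L" "real_linear_det L \<noteq> 0"
  shows "L (real_linear_inverse L v) = v"
proof -
  define a b d where "a = - Im (cnj (L \<i>) * v)" and "b = Im (cnj (L 1) * v)"
    and "d = real_linear_det L"
  define w where "w = real_linear_inverse L v"
  have "Re w = a / d" "Im w = b / d"
    by (simp_all add: w_def real_linear_inverse_def a_def b_def d_def)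
  then have "L w = (1 / d) *\<^sub>R (a *\<^sub>R L 1 + b *\<^sub>R L \<i>)"
    using linear_complex_decomp[OF assms(1), of w] by (simp add: scaleR_add_right)
  also have "a *\<^sub>R L 1 + b *\<^sub>R L \<i> = d *\<^sub>R v"
    by (simp add: a_def b_def d_def real_linear_det_def complex_eq_iff algebra_simps)
  finally show ?thesis
    using assms(2) by (simp add: w_def d_def)
qed

lemma real_linear_det_nonzero:
  assumes "linear L" "0 < m" "\<And>h. m * norm h \<le> norm (L h)"
  shows "real_linear_det L \<noteq> 0"
proof
  assume det: "real_linear_det L = 0"
  have "L (Complex (Re (L \<i>)) (- Re (L 1))) = 0" "L (Complex (Im (L \<i>)) (- Im (L 1))) = 0"
    using det linear_complex_decomp[OF assms(1), of "Complex (Re (L \<i>)) (- Re (L 1))"]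
      linear_complex_decomp[OF assms(1), of "Complex (Im (L \<i>)) (- Im (L 1))"]
    by (simp_all add: scaleR_conv_of_real real_linear_det_def complex_eq_iff algebra_simps)
  moreover have "h = 0" if "L h = 0" for h
    using assms(2) assms(3)[of h] that by (simp add: mult_le_0_iff)
  ultimately have "Complex (Re (L \<i>)) (- Re (L 1)) = 0" "Complex (Im (L \<i>)) (- Im (L 1)) = 0"
    by blast+
  then have "L 1 = 0"
    by (simp add: complex_eq_iff)
  then show False
    using assms(2) assms(3)[of 1] by simp
qed

lemma lower_bound_perturbed_linear:
  fixes A B :: "'a::real_normed_vector \<Rightarrow> 'b::real_normed_vector"
  assumes "bounded_linear A" "bounded_linear B" "onorm (A - B) \<le> e" "m * norm h \<le> norm (B h)"
  shows "(m - e) * norm h \<le> norm (A h)"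
proof -
  have "bounded_linear (A - B)"
    using assms(1,2) by (simp add: fun_diff_def bounded_linear_sub)
  then have "norm (A h - B h) \<le> e * norm h"
    using onorm[of "A - B" h] assms(3) by (simp add: mult_right_mono order_trans)
  moreover have "norm (B h) \<le> norm (A h) + norm (A h - B h)"
    by (metis add.commute diff_add_cancel norm_minus_commute norm_triangle_ineq)
  ultimately show ?thesis
    using assms(4) by (simp add: algebra_simps)
qed

lemma lower_bound_from_derivative:
  fixes f :: "'a::real_normed_vector \<Rightarrow> 'b::real_normed_vector"
  assumes "convex S" "a \<in> S" "x \<in> S" "y \<in> S"
    and "\<And>x. x \<in> S \<Longrightarrow> (f has_derivative f' x) (at x within S)"
    and "\<And>x. x \<in> S \<Longrightarrow> onorm (f' x - f' a) \<le> e"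
    and "\<And>h. m * norm h \<le> norm (f' a h)"
  shows "(m - e) * norm (x - y) \<le> norm (f x - f y)"
proof -
  have "norm (f x - f y - f' a (x - y)) \<le> norm (x - y) * e"
  proof (rule differentiable_bound_linearization[OF _ assms(5,6,2)])
    show "y + t *\<^sub>R (x - y) \<in> S" if "t \<in> {0..1}" for t
      using convexD_alt[OF assms(1,4,3), of t] that by (simp add: algebra_simps)
  qed
  moreover have "norm (f' a (x - y)) \<le> norm (f x - f y) + norm (f x - f y - f' a (x - y))"
    by (metis add.commute diff_add_cancel norm_minus_commute norm_triangle_ineq)
  ultimately show ?thesis
    using assms(7)[of "x - y"] by (simp add: algebra_simps)
qed

lemma C1_derivative_estimates_near_compact:
  fixes f :: "complex \<Rightarrow> complex"
  assumes C1: "C1_on UNIV f" and "compact K" "0 < e"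
  obtains \<rho> B where "0 < \<rho>"
    "\<And>z x. z \<in> K \<Longrightarrow> x \<in> ball z \<rho> \<Longrightarrow>
       onorm (frechet_derivative f (at x) - frechet_derivative f (at z)) \<le> e"
    "\<And>z x. z \<in> K \<Longrightarrow> x \<in> ball z \<rho> \<Longrightarrow> onorm (frechet_derivative f (at x)) \<le> B"
proof -
  define D where "D x = frechet_derivative f (at x)" for x
  define J where "J x = (D x 1, D x \<i>)" for x
  have "f differentiable (at x)" for x
    using C1 by (simp add: C1_on_def)
  then have bl: "bounded_linear (D x)" for x
    unfolding D_def frechet_derivative_works by (rule has_derivative_bounded_linear)
  obtain R where R: "\<And>z. z \<in> K \<Longrightarrow> norm z \<le> R"
    using compact_imp_bounded[OF \<open>compact K\<close>] bounded_iff by blast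
  define K' where "K' = cball (0::complex) (R + 1)"
  have near_K': "x \<in> K'" if "z \<in> K" "dist z x < 1" for z x
    using R[OF that(1)] that(2) norm_triangle_ineq2[of x z]
    by (simp add: K'_def dist_norm norm_minus_commute)
  have cont_D: "continuous_on UNIV (\<lambda>x. D x 1)" "continuous_on UNIV (\<lambda>x. D x \<i>)"
    using C1 by (simp_all add: C1_on_def D_def)
  then have "continuous_on UNIV J"
    unfolding J_def by (rule continuous_on_Pair)
  then have "uniformly_continuous_on K' J"
    unfolding K'_def by (rule compact_uniformly_continuous[OF continuous_on_subset compact_cball]) simp
  moreover have "0 < e / 2"
    using \<open>0 < e\<close> by simp
  ultimately obtain \<delta> where \<delta>: "0 < \<delta>"
      "\<And>x y. x \<in> K' \<Longrightarrow> y \<in> K' \<Longrightarrow> dist y x < \<delta> \<Longrightarrow> dist (J y) (J x) < e / 2"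
    using uniformly_continuous_onE by blast
  have "continuous_on UNIV (\<lambda>x. norm (D x 1) + norm (D x \<i>))"
    using cont_D by (intro continuous_intros)
  then have "compact ((\<lambda>x. norm (D x 1) + norm (D x \<i>)) ` K')"
    unfolding K'_def by (rule compact_continuous_image[OF continuous_on_subset compact_cball]) simp
  then obtain B where "\<forall>y\<in>(\<lambda>x. norm (D x 1) + norm (D x \<i>)) ` K'. norm y \<le> B"
    using compact_imp_bounded bounded_iff by blast
  then have B: "norm (D x 1) + norm (D x \<i>) \<le> B" if "x \<in> K'" for x
    using that by fastforce
  show thesis
  proof (rule that[of "min \<delta> 1" B])
    fix z x assume "z \<in> K" "x \<in> ball z (min \<delta> 1)"
    then have xz: "x \<in> K'" "z \<in> K'" "dist x z < \<delta>"
      using near_K'[of z] R by (auto simp: K'_def dist_commute)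
    have "onorm (D x - D z) \<le> norm ((D x - D z) 1) + norm ((D x - D z) \<i>)"
      using bounded_linear_sub[OF bl bl] unfolding fun_diff_def
      by (intro onorm_linear_complex_le bounded_linear.linear)
    also have "\<dots> \<le> dist (J x) (J z) + dist (J x) (J z)"
      using dist_fst_le[of "J x" "J z"] dist_snd_le[of "J x" "J z"]
      by (simp add: J_def dist_norm)
    also have "\<dots> < e"
      using \<delta>(2)[OF xz(2,1,3)] by simp
    finally show "onorm (frechet_derivative f (at x) - frechet_derivative f (at z)) \<le> e"
      by (simp add: D_def)
    show "onorm (frechet_derivative f (at x)) \<le> B"
      using onorm_linear_complex_le[OF bounded_linear.linear[OF bl], of x] B[OF xz(1)]
      unfolding D_def by linarith
  qed (use \<delta> in simp)
qed

lemma compact_inj_separated: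
  fixes f :: "'a::metric_space \<Rightarrow> 'b::metric_space"
  assumes "compact K" "continuous_on K f" "inj_on f K" "0 < \<delta>"
  obtains \<epsilon> where "0 < \<epsilon>" "\<And>p q. p \<in> K \<Longrightarrow> q \<in> K \<Longrightarrow> \<delta> \<le> dist p q \<Longrightarrow> \<epsilon> \<le> dist (f p) (f q)"
proof (cases "\<exists>p\<in>K. \<exists>q\<in>K. \<delta> \<le> dist p q")
  case False
  show thesis
  proof (rule that[of 1])
    fix p q assume "p \<in> K" "q \<in> K" "\<delta> \<le> dist p q"
    with False show "1 \<le> dist (f p) (f q)"
      by blast
  qed simp
next
  case True
  define S where "S = (K \<times> K) \<inter> {pq. \<delta> \<le> dist (fst pq) (snd pq)}"
  define \<phi> where "\<phi> pq = dist (f (fst pq)) (f (snd pq))" for pq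
  have "closed {pq :: 'a \<times> 'a. \<delta> \<le> dist (fst pq) (snd pq)}"
    by (intro closed_Collect_le continuous_intros)
  then have "compact S"
    unfolding S_def by (intro compact_Int_closed compact_Times assms(1))
  moreover have "S \<noteq> {}"
    using True by (auto simp: S_def)
  moreover have "continuous_on S \<phi>"
  proof -
    have "continuous_on S (\<lambda>pq. f (fst pq))"
      by (rule continuous_on_compose2[OF assms(2) continuous_on_fst[OF continuous_on_id]])
        (auto simp: S_def)
    moreover have "continuous_on S (\<lambda>pq. f (snd pq))"
      by (rule continuous_on_compose2[OF assms(2) continuous_on_snd[OF continuous_on_id]])
        (auto simp: S_def)
    ultimately show ?thesis
      unfolding \<phi>_def by (rule continuous_on_dist)
  qed
  ultimately obtain pq0 where pq0: "pq0 \<in> S" "\<And>pq. pq \<in> S \<Longrightarrow> \<phi> pq0 \<le> \<phi> pq"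
    using continuous_attains_inf[of S \<phi>] by blast
  have "fst pq0 \<in> K" "snd pq0 \<in> K" "fst pq0 \<noteq> snd pq0"
    using pq0(1) \<open>0 < \<delta>\<close> by (auto simp: S_def)
  then have "0 < \<phi> pq0"
    using assms(3) by (simp add: \<phi>_def inj_on_eq_iff)
  then show thesis
  proof (rule that)
    fix p q assume "p \<in> K" "q \<in> K" "\<delta> \<le> dist p q"
    then have "(p, q) \<in> S"
      by (simp add: S_def)
    from pq0(2)[OF this] show "\<phi> pq0 \<le> dist (f p) (f q)"
      by (simp add: \<phi>_def)
  qed
qed

lemma bilipschitz_pair_near_compact:
  fixes f :: "'a::metric_space \<Rightarrow> 'b::metric_space"
  assumes bounded: "bounded K" "bounded (f ` K)" and "0 < \<rho>" "0 \<le> B"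
    and local: "\<And>z x y. z \<in> K \<Longrightarrow> x \<in> ball z \<rho> \<Longrightarrow> y \<in> ball z \<rho> \<Longrightarrow>
      m * dist x y \<le> dist (f x) (f y) \<and> dist (f x) (f y) \<le> B * dist x y"
    and separated: "\<And>p q. p \<in> K \<Longrightarrow> q \<in> K \<Longrightarrow> \<rho> / 4 \<le> dist p q \<Longrightarrow> \<epsilon> \<le> dist (f p) (f q)"
    and r: "r \<le> \<rho> / 8" "B * r \<le> \<epsilon> / 4"
    and c: "0 \<le> c" "c \<le> m" "c * (\<rho> + diameter K) \<le> \<epsilon> / 2"
    and C: "B + 2 * diameter (f ` K) / \<rho> \<le> C"
    and z': "z' \<in> K" "dist z z' < r" and w': "w' \<in> K" "dist w w' < r"
  shows "c * dist z w \<le> dist (f z) (f w) \<and> dist (f z) (f w) \<le> C * dist z w"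
proof -
  define dK dfK where "dK = diameter K" and "dfK = diameter (f ` K)"
  have diam: "0 \<le> dK" "0 \<le> dfK"
    using diameter_ge_0 bounded by (auto simp: dK_def dfK_def)
  have "0 \<le> 2 * dfK / \<rho>"
    using diam \<open>0 < \<rho>\<close> by simp
  then have "B \<le> C"
    using C by (simp add: dfK_def)
  have in_ball: "x \<in> ball x' \<rho>" if "dist x x' < r" for x x'
    using that r(1) \<open>0 < \<rho>\<close> by (simp add: dist_commute)
  have f_near: "dist (f x) (f x') \<le> B * r" if "x' \<in> K" "dist x x' < r" for x x'
    using local[OF that(1) in_ball[OF that(2)], of x'] that(2) \<open>0 < \<rho>\<close> \<open>0 \<le> B\<close>
    by (smt (verit) centre_in_ball mult_left_mono)
  show ?thesis
  proof (cases "dist z w < \<rho> / 2")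
    case True
    then have "w \<in> ball z' \<rho>"
      using z'(2) r(1) \<open>0 < \<rho>\<close> dist_triangle[of z' w z] by (simp add: dist_commute)
    then show ?thesis
      using local[OF z'(1) in_ball[OF z'(2)], of w] c(2) \<open>B \<le> C\<close>
      by (meson mult_right_mono order_trans zero_le_dist)
  next
    case False
    have "dist z w \<le> dist z z' + dist z' w' + dist w' w"
      using dist_triangle[of z w z'] dist_triangle[of z' w w'] by linarith
    moreover have "dist z' w' \<le> dK"
      unfolding dK_def using diameter_bounded_bound[OF bounded(1) z'(1) w'(1)] .
    ultimately have zw: "\<rho> / 2 \<le> dist z w" "dist z w \<le> \<rho> + dK" "\<rho> / 4 \<le> dist z' w'"
      using False z'(2) w'(2) r(1) \<open>0 < \<rho>\<close> by (auto simp: dist_commute)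
    have "dist (f z') (f w') \<le> dist (f z) (f z') + dist (f z) (f w) + dist (f w) (f w')"
      using dist_triangle[of "f z'" "f w'" "f z"] dist_triangle[of "f z" "f w'" "f w"]
      by (simp add: dist_commute)
    then have "\<epsilon> / 2 \<le> dist (f z) (f w)"
      using separated[OF z'(1) w'(1) zw(3)] f_near[OF z'] f_near[OF w'] r(2) by linarith
    moreover have "c * dist z w \<le> \<epsilon> / 2"
      using mult_left_mono[OF zw(2) c(1)] c(3) by (simp add: dK_def)
    moreover have "dist (f z) (f w) \<le> B * r + dfK + B * r"
      using dist_triangle[of "f z" "f w" "f z'"] dist_triangle[of "f z'" "f w" "f w'"]
        f_near[OF z'] f_near[OF w'] diameter_bounded_bound[OF bounded(2), of "f z'" "f w'"] z'(1) w'(1)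
      by (simp add: dfK_def dist_commute)
    moreover have "B * r + dfK + B * r \<le> C * dist z w"
    proof -
      have "B * \<rho> / 2 + dfK = (B + 2 * dfK / \<rho>) * (\<rho> / 2)"
        using \<open>0 < \<rho>\<close> by (simp add: field_simps)
      also have "\<dots> \<le> C * dist z w"
        using C zw(1) \<open>0 < \<rho>\<close> \<open>0 \<le> B\<close> \<open>0 \<le> 2 * dfK / \<rho>\<close>
        by (intro mult_mono) (auto simp: dfK_def)
      finally have "B * \<rho> / 2 + dfK \<le> C * dist z w" .
      moreover have "B * r \<le> B * \<rho> / 8"
        using mult_left_mono[OF r(1) \<open>0 \<le> B\<close>] by simp
      ultimately show ?thesis
        using mult_nonneg_nonneg[OF \<open>0 \<le> B\<close> less_imp_le[OF \<open>0 < \<rho>\<close>]] by linarith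
    qed
    ultimately show ?thesis
      by linarith
  qed
qed

lemma compact_infdist_lessE:
  fixes x :: "'a::heine_borel"
  assumes "compact K" "K \<noteq> {}" "infdist x K < r"
  obtains z where "z \<in> K" "dist x z < r"
proof -
  obtain z where "z \<in> K" "infdist x K = dist x z"
    using infdist_attains_inf[OF compact_imp_closed[OF assms(1)] assms(2)] by blast
  then show thesis
    using that assms(3) by simp
qed

lemma bilipschitz_near_compact:
  fixes f :: "'a::heine_borel \<Rightarrow> 'b::metric_space"
  assumes "compact K" "K \<noteq> {}" "continuous_on K f" "inj_on f K" "0 < \<rho>" "0 < m" "0 \<le> B"
    and local: "\<And>z x y. z \<in> K \<Longrightarrow> x \<in> ball z \<rho> \<Longrightarrow> y \<in> ball z \<rho> \<Longrightarrow>
      m * dist x y \<le> dist (f x) (f y) \<and> dist (f x) (f y) \<le> B * dist x y"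
  obtains r c C where "0 < r" "r \<le> \<rho>" "0 < c" "0 < C"
    "\<And>z w. infdist z K < r \<Longrightarrow> infdist w K < r \<Longrightarrow>
       c * dist z w \<le> dist (f z) (f w) \<and> dist (f z) (f w) \<le> C * dist z w"
proof -
  obtain \<epsilon> where \<epsilon>: "0 < \<epsilon>"
      "\<And>p q. p \<in> K \<Longrightarrow> q \<in> K \<Longrightarrow> \<rho> / 4 \<le> dist p q \<Longrightarrow> \<epsilon> \<le> dist (f p) (f q)"
    using compact_inj_separated[OF assms(1,3,4), of "\<rho> / 4"] \<open>0 < \<rho>\<close> by auto
  have bounded: "bounded K" "bounded (f ` K)"
    using assms(1,3) compact_imp_bounded compact_continuous_image by blast+
  define dK dfK where "dK = diameter K" and "dfK = diameter (f ` K)"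
  have diam: "0 \<le> dK" "0 \<le> dfK"
    using diameter_ge_0 bounded by (auto simp: dK_def dfK_def)
  define r where "r = min (\<rho> / 8) (\<epsilon> / (4 * (B + 1)))"
  define c where "c = min m (\<epsilon> / (2 * (\<rho> + dK)))"
  define C where "C = B + 2 * dfK / \<rho> + 1"
  have r: "0 < r" "r \<le> \<rho> / 8" "B * r \<le> \<epsilon> / 4"
  proof -
    show "0 < r"
      using \<open>0 \<le> B\<close> \<open>0 < \<rho>\<close> \<epsilon>(1) by (simp add: r_def)
    show "r \<le> \<rho> / 8"
      unfolding r_def by (rule min.cobounded1)
    have "r \<le> \<epsilon> / (4 * (B + 1))"
      unfolding r_def by (rule min.cobounded2)
    then have "r * (4 * (B + 1)) \<le> \<epsilon>"
      using \<open>0 \<le> B\<close> by (simp add: pos_le_divide_eq)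
    then show "B * r \<le> \<epsilon> / 4"
      using \<open>0 < r\<close> by (simp add: algebra_simps)
  qed
  have c: "0 < c" "c \<le> m" "c * (\<rho> + dK) \<le> \<epsilon> / 2"
  proof -
    show "0 < c" "c \<le> m"
      using \<open>0 < m\<close> \<epsilon>(1) \<open>0 < \<rho>\<close> diam by (simp_all add: c_def)
    have "c * (\<rho> + dK) \<le> \<epsilon> / (2 * (\<rho> + dK)) * (\<rho> + dK)"
      using \<open>0 < \<rho>\<close> diam by (intro mult_right_mono) (auto simp: c_def)
    also have "\<dots> = \<epsilon> / 2"
      using \<open>0 < \<rho>\<close> diam by (simp add: field_simps)
    finally show "c * (\<rho> + dK) \<le> \<epsilon> / 2" .
  qed
  have "0 < C"
    using \<open>0 \<le> B\<close> divide_nonneg_pos[OF _ \<open>0 < \<rho>\<close>, of "2 * dfK"] diam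
    unfolding C_def by linarith
  show thesis
  proof (rule that[OF r(1) _ c(1) \<open>0 < C\<close>])
    show "r \<le> \<rho>"
      using r(2) \<open>0 < \<rho>\<close> by simp
    fix z w assume "infdist z K < r" "infdist w K < r"
    then obtain z' w' where "z' \<in> K" "dist z z' < r" "w' \<in> K" "dist w w' < r"
      using compact_infdist_lessE[OF assms(1,2)] by metis
    moreover have "B + 2 * diameter (f ` K) / \<rho> \<le> C"
      by (simp add: C_def dfK_def)
    ultimately show "c * dist z w \<le> dist (f z) (f w) \<and> dist (f z) (f w) \<le> C * dist z w"
      using bilipschitz_pair_near_compact[where K = K and f = f and \<rho> = \<rho> and B = B and m = m
          and \<epsilon> = \<epsilon> and r = r and c = c and C = C]
        bounded \<open>0 < \<rho>\<close> \<open>0 \<le> B\<close> local \<epsilon>(2) r(2,3) less_imp_le[OF c(1)] c(2) c(3)[unfolded dK_def]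
      by blast
  qed
qed

lemma has_derivative_real_linear_inverse:
  fixes f g :: "complex \<Rightarrow> complex"
  assumes "open U" "\<And>x. x \<in> U \<Longrightarrow> (f has_derivative D x) (at x)"
    and "\<And>x. x \<in> U \<Longrightarrow> g (f x) = x" "x \<in> U" "real_linear_det (D x) \<noteq> 0"
  shows "(g has_derivative real_linear_inverse (D x)) (at (f x))"
proof -
  have "D x \<circ> real_linear_inverse (D x) = id"
    using real_linear_inverse_right[OF has_derivative_linear[OF assms(2)[OF assms(4)]] assms(5)] by auto
  then show ?thesis
    using has_derivative_inverse_on[where g' = "\<lambda>x. real_linear_inverse (D x)", OF assms(1-3)] assms(4)
    by blast
qed

lemma C1_on_inverse:
  fixes f :: "complex \<Rightarrow> complex"
  assumes "open U" "C1_on U f" "inj_on f U"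
    and det: "\<And>x. x \<in> U \<Longrightarrow> real_linear_det (frechet_derivative f (at x)) \<noteq> 0"
  shows "C1_on (f ` U) (inv_into U f)"
proof -
  define g where "g = inv_into U f"
  define D where "D x = frechet_derivative f (at x)" for x
  have gf: "g (f x) = x" if "x \<in> U" for x
    using assms(3) that by (simp add: g_def)
  have gU: "g y \<in> U" if "y \<in> f ` U" for y
    using that gf by auto
  have Dd: "(f has_derivative D x) (at x)" if "x \<in> U" for x
    using assms(2) that unfolding C1_on_def D_def frechet_derivative_works by blast
  have g_deriv: "(g has_derivative real_linear_inverse (D (g y))) (at y)" if "y \<in> f ` U" for y
  proof -
    obtain x where x: "x \<in> U" "y = f x"
      using \<open>y \<in> f ` U\<close> by blast
    have "(g has_derivative real_linear_inverse (D x)) (at (f x))"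
      using has_derivative_real_linear_inverse[OF assms(1) Dd gf x(1)] det[OF x(1)] by (simp add: D_def)
    then show ?thesis
      using x gf by simp
  qed
  have cont_f: "continuous_on U f"
    using assms(2) unfolding C1_on_def
    by (meson continuous_at_imp_continuous_on differentiable_imp_continuous_within)
  have "continuous_on (f ` U) g"
    using continuous_on_inverse_open[OF assms(1) cont_f _ gf] by simp
  then have cont_comp: "continuous_on (f ` U) (\<lambda>y. h (g y))" if "continuous_on U h" for h :: "complex \<Rightarrow> complex"
    using continuous_on_compose2[OF that] gU by blast
  have cont_D: "continuous_on U (\<lambda>x. D x 1)" "continuous_on U (\<lambda>x. D x \<i>)"
    using assms(2) by (simp_all add: C1_on_def D_def)
  have cont_Dg: "continuous_on (f ` U) (\<lambda>y. D (g y) 1)" "continuous_on (f ` U) (\<lambda>y. D (g y) \<i>)"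
    using cont_comp[OF cont_D(1)] cont_comp[OF cont_D(2)] by simp_all
  then have cont_det: "continuous_on (f ` U) (\<lambda>y. real_linear_det (D (g y)))"
    unfolding real_linear_det_def by (intro continuous_intros)
  have det_g: "real_linear_det (D (g y)) \<noteq> 0" if "y \<in> f ` U" for y
    using det[OF gU[OF that]] by (simp add: D_def)
  have cont_inverse: "continuous_on (f ` U) (\<lambda>y. real_linear_inverse (D (g y)) v)" for v
    unfolding real_linear_inverse_def using cont_Dg cont_det det_g by (intro continuous_intros) auto
  have frechet_g: "frechet_derivative g (at y) = real_linear_inverse (D (g y))" if "y \<in> f ` U" for y
    using g_deriv[OF that] by (rule frechet_derivative_at[symmetric])
  show ?thesis
    unfolding C1_on_def g_def[symmetric]
  proof (intro conjI ballI)
    show "g differentiable (at y)" if "y \<in> f ` U" for y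
      using g_deriv[OF that] by (auto simp: differentiable_def)
    show "continuous_on (f ` U) (\<lambda>y. frechet_derivative g (at y) 1)"
      "continuous_on (f ` U) (\<lambda>y. frechet_derivative g (at y) \<i>)"
      by (rule continuous_on_eq[OF cont_inverse], simp add: frechet_g)+
  qed
qed

lemma C1_local_bilipschitz:
  fixes f :: "complex \<Rightarrow> complex"
  assumes C1: "C1_on UNIV f" and "compact K" "K \<noteq> {}" "0 < m"
    and lower: "\<And>z h. z \<in> K \<Longrightarrow> m * norm h \<le> norm (frechet_derivative f (at z) h)"
  obtains \<rho> B where "0 < \<rho>" "0 \<le> B"
    "\<And>z x h. z \<in> K \<Longrightarrow> x \<in> ball z \<rho> \<Longrightarrow> m / 2 * norm h \<le> norm (frechet_derivative f (at x) h)"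
    "\<And>z x y. z \<in> K \<Longrightarrow> x \<in> ball z \<rho> \<Longrightarrow> y \<in> ball z \<rho> \<Longrightarrow>
       m / 2 * dist x y \<le> dist (f x) (f y) \<and> dist (f x) (f y) \<le> B * dist x y"
proof -
  define D where "D x = frechet_derivative f (at x)" for x
  have Dd: "(f has_derivative D x) (at x)" for x
    using C1 unfolding C1_on_def D_def frechet_derivative_works by blast
  have bl: "bounded_linear (D x)" for x
    using Dd by (rule has_derivative_bounded_linear)
  obtain \<rho> B where \<rho>: "0 < \<rho>"
    and close: "\<And>z x. z \<in> K \<Longrightarrow> x \<in> ball z \<rho> \<Longrightarrow> onorm (D x - D z) \<le> m / 2"
    and bound: "\<And>z x. z \<in> K \<Longrightarrow> x \<in> ball z \<rho> \<Longrightarrow> onorm (D x) \<le> B"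
    using C1_derivative_estimates_near_compact[OF C1 \<open>compact K\<close>, of "m / 2"] \<open>0 < m\<close>
    unfolding D_def by auto
  have lowerD: "m * norm h \<le> norm (D z h)" if "z \<in> K" for z h
    using lower[OF that] by (simp add: D_def)
  have "0 \<le> B"
  proof -
    obtain z where "z \<in> K"
      using \<open>K \<noteq> {}\<close> by blast
    then show ?thesis
      using bound[of z z] onorm_pos_le[OF bl, of z] \<rho> by simp
  qed
  show thesis
  proof (rule that[OF \<rho> \<open>0 \<le> B\<close>])
    show "m / 2 * norm h \<le> norm (frechet_derivative f (at x) h)" if "z \<in> K" "x \<in> ball z \<rho>" for z x h
      using lower_bound_perturbed_linear[OF bl bl close[OF that] lowerD[OF that(1)]] by (simp add: D_def)
    fix z x y assume "z \<in> K" "x \<in> ball z \<rho>" "y \<in> ball z \<rho>"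
    have Dd_within: "(f has_derivative D u) (at u within ball z \<rho>)" for u
      using Dd by (rule has_derivative_at_withinI)
    have "(m - m / 2) * norm (x - y) \<le> norm (f x - f y)"
      using lower_bound_from_derivative[OF convex_ball centre_in_ball[THEN iffD2, OF \<rho>]
          \<open>x \<in> ball z \<rho>\<close> \<open>y \<in> ball z \<rho>\<close> Dd_within close[OF \<open>z \<in> K\<close>] lowerD[OF \<open>z \<in> K\<close>]] .
    moreover have "norm (f x - f y) \<le> B * norm (x - y)"
      using differentiable_bound[OF convex_ball Dd_within bound[OF \<open>z \<in> K\<close>]
          \<open>x \<in> ball z \<rho>\<close> \<open>y \<in> ball z \<rho>\<close>] .
    ultimately show "m / 2 * dist x y \<le> dist (f x) (f y) \<and> dist (f x) (f y) \<le> B * dist x y"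
      by (simp add: dist_norm)
  qed
qed

lemma C1_bilipschitz_neighbourhood:
  fixes f :: "complex \<Rightarrow> complex"
  assumes C1: "C1_on UNIV f" and "compact K" "K \<noteq> {}" "inj_on f K" "0 < m"
    and lower: "\<And>z h. z \<in> K \<Longrightarrow> m * norm h \<le> norm (frechet_derivative f (at z) h)"
  obtains U g c C where "open U" "K \<subseteq> U" "inj_on f U" "C1_on U f" "open (f ` U)"
    "\<And>z. z \<in> U \<Longrightarrow> g (f z) = z" "C1_on (f ` U) g" "0 < c" "0 < C"
    "\<And>z w. z \<in> U \<Longrightarrow> w \<in> U \<Longrightarrow>
       c * norm (z - w) \<le> norm (f z - f w) \<and> norm (f z - f w) \<le> C * norm (z - w)"
proof -
  obtain \<rho> B where \<rho>: "0 < \<rho>" "0 \<le> B"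
    and lower_near: "\<And>z x h. z \<in> K \<Longrightarrow> x \<in> ball z \<rho> \<Longrightarrow>
      m / 2 * norm h \<le> norm (frechet_derivative f (at x) h)"
    and local: "\<And>z x y. z \<in> K \<Longrightarrow> x \<in> ball z \<rho> \<Longrightarrow> y \<in> ball z \<rho> \<Longrightarrow>
      m / 2 * dist x y \<le> dist (f x) (f y) \<and> dist (f x) (f y) \<le> B * dist x y"
    using C1_local_bilipschitz[OF C1 \<open>compact K\<close> \<open>K \<noteq> {}\<close> \<open>0 < m\<close> lower] by blast
  have cont: "continuous_on UNIV f"
    using C1 unfolding C1_on_def
    by (meson continuous_at_imp_continuous_on differentiable_imp_continuous_within)
  then have "continuous_on K f"
    by (rule continuous_on_subset) simp
  moreover have "0 < m / 2"
    using \<open>0 < m\<close> by simp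
  ultimately obtain r c C where r: "0 < r" "r \<le> \<rho>" and cC: "0 < c" "0 < C"
    and bilip: "\<And>z w. infdist z K < r \<Longrightarrow> infdist w K < r \<Longrightarrow>
       c * dist z w \<le> dist (f z) (f w) \<and> dist (f z) (f w) \<le> C * dist z w"
    using bilipschitz_near_compact[where m = "m / 2" and B = B and f = f and K = K and \<rho> = \<rho>]
      \<open>compact K\<close> \<open>K \<noteq> {}\<close> \<open>inj_on f K\<close> \<rho> local by blast
  define U where "U = {z. infdist z K < r}"
  have "open U"
    unfolding U_def by (intro open_Collect_less continuous_intros)
  have inj: "inj_on f U"
  proof (rule inj_onI)
    fix x y assume "x \<in> U" "y \<in> U" "f x = f y"
    then have "c * dist x y \<le> 0"
      using bilip[of x y] by (simp add: U_def)
    then show "x = y"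
      using cC(1) by (simp add: mult_le_0_iff)
  qed
  have C1U: "C1_on U f"
    using C1 by (auto simp: C1_on_def intro: continuous_on_subset[OF _ subset_UNIV])
  show thesis
  proof (rule that[OF \<open>open U\<close> _ inj C1U _ _ _ cC])
    show "K \<subseteq> U"
      using r(1) by (auto simp: U_def)
    show "open (f ` U)"
      using invariance_of_domain[OF continuous_on_subset[OF cont] \<open>open U\<close> inj] by simp
    show "inv_into U f (f z) = z" if "z \<in> U" for z
      using inj that by simp
    show "C1_on (f ` U) (inv_into U f)"
    proof (rule C1_on_inverse[OF \<open>open U\<close> C1U inj])
      fix x assume "x \<in> U"
      then obtain z where "z \<in> K" "dist x z < r"
        using compact_infdist_lessE[OF \<open>compact K\<close> \<open>K \<noteq> {}\<close>] by (auto simp: U_def)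
      moreover have "linear (frechet_derivative f (at x))"
        using C1 by (simp add: C1_on_def linear_frechet_derivative)
      ultimately show "real_linear_det (frechet_derivative f (at x)) \<noteq> 0"
        using real_linear_det_nonzero[OF _ _ lower_near] r(2) \<open>0 < m\<close> by (simp add: dist_commute)
    qed
    show "c * norm (z - w) \<le> norm (f z - f w) \<and> norm (f z - f w) \<le> C * norm (z - w)"
      if "z \<in> U" "w \<in> U" for z w
      using bilip that by (simp add: U_def dist_norm)
  qed
qed

lemma complex_linear_derivative_lower_bound:
  fixes f :: "complex \<Rightarrow> complex"
  assumes "compact K" "K \<noteq> {}" "continuous_on K a"
    and deriv: "\<And>z. z \<in> K \<Longrightarrow> (f has_derivative (\<lambda>h. h * a z)) (at z)"
    and nonzero: "\<And>z. z \<in> K \<Longrightarrow> a z \<noteq> 0"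
  obtains m where "0 < m" "\<And>z h. z \<in> K \<Longrightarrow> m * norm h \<le> norm (frechet_derivative f (at z) h)"
proof -
  obtain z0 where z0: "z0 \<in> K" "\<And>z. z \<in> K \<Longrightarrow> norm (a z0) \<le> norm (a z)"
    using continuous_attains_inf[OF assms(1,2) continuous_on_norm[OF assms(3)]] by blast
  show thesis
  proof (rule that[of "norm (a z0)"])
    show "0 < norm (a z0)"
      using nonzero[OF z0(1)] by simp
    fix z h assume "z \<in> K"
    then have "frechet_derivative f (at z) = (\<lambda>h. h * a z)"
      using frechet_derivative_at[OF deriv] by simp
    then have "frechet_derivative f (at z) h = h * a z"
      by simp
    then show "norm (a z0) * norm h \<le> norm (frechet_derivative f (at z) h)"
      using z0(2)[OF \<open>z \<in> K\<close>] by (simp add: norm_mult mult.commute mult_left_mono)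
  qed
qed

text \<open>No positivity of \<alpha> is needed: on \<Gamma> the bound reads \<open>C * 0 powr \<alpha>\<close>, which is \<open>0\<close>
  for every \<alpha> in Isabelle.\<close>

lemma pseudoanalytic_ext_complex_derivative_on_curve:
  assumes "pseudoanalytic_ext \<alpha> \<Gamma> f F" "z \<in> \<Gamma>"
  shows "(F has_derivative (\<lambda>h. h * frechet_derivative F (at z) 1)) (at z)"
proof -
  define L where "L = frechet_derivative F (at z)"
  define a where "a = L 1"
  have deriv: "(F has_derivative L) (at z)"
    using assms(1) unfolding pseudoanalytic_ext_def C1_on_def L_def frechet_derivative_works by blast
  obtain C where "\<And>w. norm (dbar F w) \<le> C * infdist w \<Gamma> powr \<alpha>"
    using assms(1) unfolding pseudoanalytic_ext_def by blast
  then have "norm (dbar F z) \<le> C * infdist z \<Gamma> powr \<alpha>" .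
  then have "dbar F z = 0"
    using \<open>z \<in> \<Gamma>\<close> by (simp add: infdist_zero)
  then have "L 1 = - (\<i> * L \<i>)"
    by (simp add: dbar_def L_def eq_neg_iff_add_eq_0)
  then have Li: "L \<i> = \<i> * L 1"
    by simp
  have "L = (\<lambda>h. h * a)"
    unfolding a_def by (intro ext) (rule complex_linear_eq_mult[OF has_derivative_linear[OF deriv] Li])
  with deriv have "(F has_derivative (\<lambda>h. h * a)) (at z)"
    by simp
  then show ?thesis
    by (simp add: a_def L_def)
qed

lemma cis_Arg_unit: "norm z = 1 \<Longrightarrow> cis (Arg z) = z"
  using cis_Arg[of z] by (cases "z = 0") (auto simp: sgn_eq)

lemma C1a_jordan_param_image:
  assumes "C1a_jordan_param \<alpha> \<psi> \<Gamma>"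
  shows "\<Gamma> = (\<lambda>s. \<psi> (cis s)) ` {-pi..pi}"
proof
  have bij: "bij_betw \<psi> (sphere 0 1) \<Gamma>"
    using assms by (simp add: C1a_jordan_param_def)
  then show "(\<lambda>s. \<psi> (cis s)) ` {-pi..pi} \<subseteq> \<Gamma>"
    by (auto simp: bij_betw_def)
  show "\<Gamma> \<subseteq> (\<lambda>s. \<psi> (cis s)) ` {-pi..pi}"
  proof
    fix z assume "z \<in> \<Gamma>"
    then obtain u where "norm u = 1" "z = \<psi> u"
      using bij by (auto simp: bij_betw_def)
    have "Arg u \<in> {-pi..pi}"
      using mpi_less_Arg[of u] Arg_le_pi[of u] by simp
    moreover have "z = \<psi> (cis (Arg u))"
      using \<open>norm u = 1\<close> \<open>z = \<psi> u\<close> cis_Arg_unit by simp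
    ultimately show "z \<in> (\<lambda>s. \<psi> (cis s)) ` {-pi..pi}"
      by (rule rev_image_eqI)
  qed
qed

lemma C1a_jordan_param_compact:
  assumes "C1a_jordan_param \<alpha> \<psi> \<Gamma>"
  shows "compact \<Gamma>" "\<Gamma> \<noteq> {}"
proof -
  obtain \<psi>' where "\<And>t. ((\<lambda>s. \<psi> (cis s)) has_vector_derivative \<psi>' t) (at t)"
    using assms by (auto simp: C1a_jordan_param_def C1a_circle_with_def)
  then have "continuous_on {-pi..pi} (\<lambda>s. \<psi> (cis s))"
    by (intro continuous_at_imp_continuous_on ballI) (rule has_vector_derivative_continuous)
  then have "compact ((\<lambda>s. \<psi> (cis s)) ` {-pi..pi})"
    by (rule compact_continuous_image[OF _ compact_Icc])
  then show "compact \<Gamma>"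
    using C1a_jordan_param_image[OF assms] by simp
  show "\<Gamma> \<noteq> {}"
    using C1a_jordan_param_image[OF assms] pi_ge_zero by auto
qed

lemma differentiable_angle_on_circle:
  assumes "norm w0 = 1"
  obtains \<theta> :: "complex \<Rightarrow> real"
  where "\<theta> differentiable (at w0)" "\<And>w. norm w = 1 \<Longrightarrow> cis (\<theta> w) = w"
proof
  define \<theta> where "\<theta> w = Arg w0 + Im (Ln (w / w0))" for w
  have "w0 \<noteq> 0"
    using assms by auto
  have "Ln field_differentiable at (w0 / w0)"
    using \<open>w0 \<noteq> 0\<close> by (simp add: field_differentiable_at_Ln nonpos_Reals_def)
  moreover have "(\<lambda>w. w / w0) field_differentiable at w0"
    using \<open>w0 \<noteq> 0\<close> by (auto intro!: derivative_intros)
  ultimately have Ln_diff: "(\<lambda>w. Ln (w / w0)) differentiable (at w0)"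
    using field_differentiable_compose[of "\<lambda>w. w / w0" w0 Ln]
    by (simp add: o_def field_differentiable_imp_differentiable)
  have "(\<lambda>w. Im (Ln (w / w0))) differentiable (at w0)"
    using differentiable_compose[OF bounded_linear_imp_differentiable[OF bounded_linear_Im] Ln_diff] .
  then show "\<theta> differentiable (at w0)"
    unfolding \<theta>_def by (intro derivative_intros)
  fix w :: complex assume "norm w = 1"
  then have unit: "norm (w / w0) = 1" "w / w0 \<noteq> 0"
    using assms by (auto simp: norm_divide)
  then have "cis (Im (Ln (w / w0))) = w / w0"
    using cis_Arg_unit[OF unit(1)] Arg_eq_Im_Ln[OF unit(2)] by simp
  then show "cis (\<theta> w) = w"
    using cis_Arg_unit[OF assms] \<open>w0 \<noteq> 0\<close> by (simp add: \<theta>_def cis_mult[symmetric])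
qed

lemma has_derivative_zero_factor:
  fixes \<phi> :: "'a::real_normed_vector \<Rightarrow> 'b::real_normed_vector" and \<kappa> :: "'b \<Rightarrow> 'c::real_normed_vector"
  assumes "(\<phi> has_derivative (\<lambda>_. 0)) (at t)" "\<kappa> differentiable (at (\<phi> t))" "\<And>s. \<gamma> s = \<kappa> (\<phi> s)"
  shows "(\<gamma> has_derivative (\<lambda>_. 0)) (at t)"
proof -
  obtain K where K: "(\<kappa> has_derivative K) (at (\<phi> t))"
    using assms(2) by (auto simp: differentiable_def)
  have "K 0 = 0"
    using linear_0[OF has_derivative_linear[OF K]] .
  moreover have "\<gamma> = \<kappa> \<circ> \<phi>"
    using assms(3) by (auto simp: fun_eq_iff)
  ultimately show ?thesis
    using diff_chain_at[OF assms(1) K] by (simp add: o_def)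
qed

lemma complex_derivative_nonzero_on_curve:
  fixes \<eta> \<psi> :: "complex \<Rightarrow> complex"
  assumes param: "C1a_jordan_param \<alpha> \<psi> \<Gamma>" and "\<eta> ` \<Gamma> = sphere 0 1" "inj_on \<eta> \<Gamma>"
    and inv: "\<forall>t. (\<lambda>s. the_inv_into \<Gamma> \<eta> (cis s)) differentiable (at t)"
    and deriv: "(\<eta> has_derivative (\<lambda>h. h * a)) (at z)" and "z \<in> \<Gamma>"
  shows "a \<noteq> 0"
proof
  assume "a = 0"
  obtain \<psi>' where bij: "bij_betw \<psi> (sphere 0 1) \<Gamma>"
    and \<psi>': "\<And>t. ((\<lambda>s. \<psi> (cis s)) has_vector_derivative \<psi>' t) (at t)" "\<And>t. \<psi>' t \<noteq> 0"
    using param unfolding C1a_jordan_param_def C1a_circle_with_def by blast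
  define \<gamma> where "\<gamma> = (\<lambda>s. \<psi> (cis s))"
  have \<gamma>_in: "\<gamma> s \<in> \<Gamma>" for s
    using bij by (auto simp: \<gamma>_def bij_betw_def)
  obtain t where "\<gamma> t = z"
    using C1a_jordan_param_image[OF param] \<open>z \<in> \<Gamma>\<close> by (auto simp: \<gamma>_def)
  have \<gamma>': "(\<gamma> has_derivative (\<lambda>h. h *\<^sub>R \<psi>' t)) (at t)"
    using \<psi>'(1) by (simp add: \<gamma>_def has_vector_derivative_def)
  have "((\<eta> \<circ> \<gamma>) has_derivative (\<lambda>_. 0)) (at t)"
    using diff_chain_at[OF \<gamma>'] deriv \<open>\<gamma> t = z\<close> \<open>a = 0\<close> by (simp add: o_def)
  have "norm (\<eta> z) = 1"
    using \<open>\<eta> ` \<Gamma> = sphere 0 1\<close> \<open>z \<in> \<Gamma>\<close> by auto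
  obtain \<theta> where \<theta>: "\<theta> differentiable (at (\<eta> z))" "\<And>w. norm w = 1 \<Longrightarrow> cis (\<theta> w) = w"
    using differentiable_angle_on_circle[OF \<open>norm (\<eta> z) = 1\<close>] by blast
  \<comment> \<open>A branch of the angle followed by the differentiable inverse of \<eta> recovers \<gamma> from \<eta> \<circ> \<gamma>.\<close>
  have "(\<lambda>w. the_inv_into \<Gamma> \<eta> (cis (\<theta> w))) differentiable (at ((\<eta> \<circ> \<gamma>) t))"
    using differentiable_compose[of "\<lambda>s. the_inv_into \<Gamma> \<eta> (cis s)" \<theta>] inv \<theta>(1) \<open>\<gamma> t = z\<close> by simp
  moreover have "\<gamma> s = the_inv_into \<Gamma> \<eta> (cis (\<theta> ((\<eta> \<circ> \<gamma>) s)))" for s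
  proof -
    have "norm (\<eta> (\<gamma> s)) = 1"
      using \<open>\<eta> ` \<Gamma> = sphere 0 1\<close> \<gamma>_in[of s] by auto
    then show ?thesis
      using \<theta>(2) the_inv_into_f_f[OF \<open>inj_on \<eta> \<Gamma>\<close> \<gamma>_in[of s]] by simp
  qed
  ultimately have "(\<gamma> has_derivative (\<lambda>_. 0)) (at t)"
    using has_derivative_zero_factor[OF \<open>((\<eta> \<circ> \<gamma>) has_derivative (\<lambda>_. 0)) (at t)\<close>] by blast
  then have "(\<lambda>_. 0) = (\<lambda>h. h *\<^sub>R \<psi>' t)"
    using has_derivative_unique[OF _ \<gamma>'] by blast
  then show False
    using \<psi>'(2)[of t] by (metis scaleR_one)
qed

theorem lemma2:
  fixes \<alpha> :: real and \<psi> \<eta> :: "complex \<Rightarrow> complex" and \<Gamma> :: "complex set"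
  assumes "0 < \<alpha>" and "\<alpha> < 1"
    and "C1a_jordan_param \<alpha> \<psi> \<Gamma>"
    and "C1a_on_curve \<alpha> \<psi> \<eta>"
    and "\<eta> ` \<Gamma> = sphere 0 1"
    and "inj_on \<eta> \<Gamma>"
    and "\<forall>t. (\<lambda>s. the_inv_into \<Gamma> \<eta> (cis s)) differentiable (at t)"
    and "pseudoanalytic_ext \<alpha> \<Gamma> \<eta> \<eta>"
  shows "\<exists>U. open U \<and> \<Gamma> \<subseteq> U \<and> inj_on \<eta> U \<and> C1_on U \<eta> \<and>
           open (\<eta> ` U) \<and> sphere 0 1 \<subseteq> \<eta> ` U \<and>
           (\<exists>g. (\<forall>z\<in>U. g (\<eta> z) = z) \<and> C1_on (\<eta> ` U) g) \<and>
           (\<exists>c C. 0 < c \<and> 0 < C \<and> (\<forall>z\<in>U. \<forall>w\<in>U.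
               c * norm (z - w) \<le> norm (\<eta> z - \<eta> w) \<and> norm (\<eta> z - \<eta> w) \<le> C * norm (z - w)))"
proof -
  define a where "a z = frechet_derivative \<eta> (at z) 1" for z
  have C1: "C1_on UNIV \<eta>"
    using assms(8) by (simp add: pseudoanalytic_ext_def)
  have deriv: "(\<eta> has_derivative (\<lambda>h. h * a z)) (at z)" if "z \<in> \<Gamma>" for z
    using pseudoanalytic_ext_complex_derivative_on_curve[OF assms(8) that] by (simp add: a_def)
  have cont: "continuous_on \<Gamma> a"
    using C1 unfolding C1_on_def a_def by (blast intro: continuous_on_subset[OF _ subset_UNIV])
  have nonzero: "a z \<noteq> 0" if "z \<in> \<Gamma>" for z
    using complex_derivative_nonzero_on_curve[OF assms(3,5,6,7) deriv[OF that] that] .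
  obtain m where m: "0 < m" "\<And>z h. z \<in> \<Gamma> \<Longrightarrow> m * norm h \<le> norm (frechet_derivative \<eta> (at z) h)"
    using complex_linear_derivative_lower_bound[OF C1a_jordan_param_compact[OF assms(3)] cont deriv nonzero]
    by blast
  show ?thesis
  proof (rule C1_bilipschitz_neighbourhood[OF C1 C1a_jordan_param_compact[OF assms(3)] assms(6) m])
    fix U g c C
    assume U: "open U" "\<Gamma> \<subseteq> U" "inj_on \<eta> U" "C1_on U \<eta>" "open (\<eta> ` U)"
      "\<And>z. z \<in> U \<Longrightarrow> g (\<eta> z) = z" "C1_on (\<eta> ` U) g" "0 < c" "0 < C"
      "\<And>z w. z \<in> U \<Longrightarrow> w \<in> U \<Longrightarrow>
         c * norm (z - w) \<le> norm (\<eta> z - \<eta> w) \<and> norm (\<eta> z - \<eta> w) \<le> C * norm (z - w)"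
    have "sphere 0 1 \<subseteq> \<eta> ` U"
      using U(2) assms(5) by blast
    then show ?thesis
      using U by (intro exI[of _ U] conjI exI[of _ g] exI[of _ c] exI[of _ C] ballI) simp_all
  qed
qed

end
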